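(* Let $p \geq 2$ be a large prime and let $\tau$ be a primitive root modulo $p$. Then for any arbitrarily small number $\varepsilon \in (0, 1/16)$, \[ \max_{\gcd(s,p-1)=1} \left| \sum_{\substack{1 \leq n \leq p-1\\ \gcd(n,p-1)=1}} e^{2\pi i s \tau^n / p} \right| \ll p^{1-\varepsilon}. \] *)

theory Defs
  imports "HOL-Analysis.Analysis" "HOL-Number_Theory.Number_Theory"
begin

end

theory Submission
  imports Defs
begin

text \<open>
  Sieving the condition \<open>coprime n (p - 1)\<close> by inclusion--exclusion over the prime factors \<open>q\<close>
  of \<open>p - 1\<close> writes the sum as a signed combination of \<open>2^\<omega>(p - 1)\<close> sums over the
  multiples \<open>n = d j\<close> of divisors \<open>d\<close> of \<open>p - 1\<close>. Each of these is a sum of additive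
  characters over the subgroup of \<open>(\<int>/p\<int>)\<^sup>*\<close> generated by \<open>\<tau>\<^sup>d\<close>, and such a sum is at most
  \<open>\<surd>p\<close>: it is constant on the coset \<open>s\<langle>\<tau>\<^sup>d\<rangle>\<close>, while by Parseval the mean square of these
  sums over all of \<open>\<int>/p\<int>\<close> is the size of the subgroup. Since \<open>2^\<omega>(m) = O(m\<^bsup>1/4\<^esup>)\<close>, the
  whole sum is \<open>O(p\<^bsup>3/4\<^esup>)\<close>.
\<close>

definition add_char :: "nat \<Rightarrow> int \<Rightarrow> complex" where
  "add_char p x = exp (2 * of_real pi * \<i> * of_int x / of_nat p)"

lemma add_char_add: "add_char p (x + y) = add_char p x * add_char p y"
  unfolding add_char_def by (simp add: exp_add[symmetric] distrib_left add_divide_distrib)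

lemma add_char_mult_of_nat: "add_char p (int n * x) = add_char p x ^ n"
  unfolding add_char_def by (simp add: exp_of_nat_mult[symmetric] mult_ac)

lemma cnj_add_char: "cnj (add_char p x) = add_char p (- x)"
  unfolding add_char_def by (simp add: exp_cnj)

lemma add_char_eq_1_iff:
  assumes "p > 0"
  shows "add_char p x = 1 \<longleftrightarrow> int p dvd x"
proof
  assume "add_char p x = 1"
  then obtain n :: int where "2 * pi * of_int x / real p = of_int (2 * n) * pi"
    unfolding add_char_def exp_eq_1 by auto
  then have "of_int x = real p * of_int n"
    using assms by (simp add: field_simps)
  then have "x = int p * n"
    by (metis of_int_eq_iff of_int_mult of_int_of_nat_eq)
  then show "int p dvd x" by simp
next
  assume "int p dvd x"
  then obtain k where "x = int p * k" by blast
  then have "add_char p x = exp ((2 * of_int k * pi) * \<i>)"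
    unfolding add_char_def using assms by (simp add: field_simps)
  also have "\<dots> = 1"
    by (rule exp_integer_2pi) simp
  finally show "add_char p x = 1" .
qed

lemma add_char_cong:
  assumes "p > 0" "[x = y] (mod int p)"
  shows "add_char p x = add_char p y"
proof -
  have "add_char p (x - y) = 1"
    using assms by (simp add: add_char_eq_1_iff cong_iff_dvd_diff)
  then show ?thesis
    using add_char_add[of p "x - y" y] by simp
qed

lemma sum_add_char_multiples:
  assumes "p > 0"
  shows "(\<Sum>x<p. add_char p (int x * t)) = (if int p dvd t then of_nat p else 0)"
proof (cases "int p dvd t")
  case True
  then have "add_char p t = 1"
    using assms by (simp add: add_char_eq_1_iff)
  then show ?thesis
    using True by (simp add: add_char_mult_of_nat)
next
  case False
  have "add_char p t ^ p = 1"
    using assms add_char_mult_of_nat[of p p t] by (metis add_char_eq_1_iff dvd_triv_left)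
  moreover have "add_char p t \<noteq> 1"
    using assms False by (simp add: add_char_eq_1_iff)
  ultimately show ?thesis
    using False geometric_sum[of "add_char p t" p] by (simp add: add_char_mult_of_nat)
qed

lemma sum_norm_sq_add_char_sum:
  fixes f :: "nat \<Rightarrow> int"
  assumes "p > 0" and distinct: "\<And>j l. j < k \<Longrightarrow> l < k \<Longrightarrow> [f j = f l] (mod int p) \<Longrightarrow> j = l"
  shows "(\<Sum>x<p. (norm (\<Sum>j<k. add_char p (int x * f j)))^2) = real (p * k)"
proof -
  have "complex_of_real (\<Sum>x<p. (norm (\<Sum>j<k. add_char p (int x * f j)))^2)
      = (\<Sum>x<p. (\<Sum>j<k. add_char p (int x * f j)) * cnj (\<Sum>l<k. add_char p (int x * f l)))"
    by (simp only: of_real_sum complex_norm_square)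
  also have "\<dots> = (\<Sum>x<p. \<Sum>j<k. \<Sum>l<k. add_char p (int x * (f l - f j)))"
    by (simp add: sum_distrib_left sum_distrib_right cnj_add_char add_char_add[symmetric]
        right_diff_distrib)
  also have "\<dots> = (\<Sum>j<k. \<Sum>l<k. \<Sum>x<p. add_char p (int x * (f l - f j)))"
    by (subst sum.swap) (simp add: sum.swap[of _ "{..<k}" "{..<p}"])
  also have "\<dots> = (\<Sum>j<k. \<Sum>l<k. if j = l then of_nat p else 0)"
  proof (intro sum.cong refl)
    fix j l assume "j \<in> {..<k}" "l \<in> {..<k}"
    then have "int p dvd f l - f j \<longleftrightarrow> j = l"
      using distinct[of l j] by (auto simp: cong_iff_dvd_diff)
    then show "(\<Sum>x<p. add_char p (int x * (f l - f j))) = (if j = l then of_nat p else 0)"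
      by (simp add: sum_add_char_multiples[OF assms(1)])
  qed
  also have "\<dots> = complex_of_real (real (p * k))"
    by simp
  finally show ?thesis
    by (simp only: of_real_eq_iff)
qed

lemma norm_add_char_sum_le_sqrt:
  fixes f :: "nat \<Rightarrow> int" and h :: "nat \<Rightarrow> nat"
  assumes "p > 0" "k > 0"
    and distinct: "\<And>j l. j < k \<Longrightarrow> l < k \<Longrightarrow> [f j = f l] (mod int p) \<Longrightarrow> j = l"
    and h: "inj_on h {..<k}" "h ` {..<k} \<subseteq> {..<p}"
    and invariant: "\<And>i. i < k \<Longrightarrow>
      norm (\<Sum>j<k. add_char p (int (h i) * f j)) = norm (\<Sum>j<k. add_char p (a * f j))"
  shows "norm (\<Sum>j<k. add_char p (a * f j)) \<le> sqrt p"
proof -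
  define T where "T x = norm (\<Sum>j<k. add_char p (x * f j))" for x
  have "real k * T a ^ 2 = (\<Sum>i<k. T (int (h i)) ^ 2)"
    using invariant by (simp add: T_def)
  also have "\<dots> = (\<Sum>y\<in>h ` {..<k}. T (int y) ^ 2)"
    by (simp add: sum.reindex[OF h(1)])
  also have "\<dots> \<le> (\<Sum>y<p. T (int y) ^ 2)"
    by (rule sum_mono2[OF _ h(2)]) auto
  also have "\<dots> = real k * real p"
    using sum_norm_sq_add_char_sum[OF assms(1) distinct] by (simp add: T_def)
  finally have "T a ^ 2 \<le> real p"
    using assms(2) by simp
  then show ?thesis
    unfolding T_def using real_le_rsqrt by blast
qed

lemma sum_lessThan_shift_periodic:
  fixes g :: "nat \<Rightarrow> 'a::comm_monoid_add"
  assumes "k > 0" and periodic: "\<And>j. g (j mod k) = g j"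
  shows "(\<Sum>j<k. g (i + j)) = (\<Sum>j<k. g j)"
proof -
  define h where "h j = (i + j) mod k" for j
  have inj: "inj_on h {..<k}"
    unfolding h_def inj_on_def by (metis cong_add_lcancel_nat cong_def lessThan_iff mod_less)
  have "h ` {..<k} = {..<k}"
    by (rule endo_inj_surj) (use inj assms(1) in \<open>auto simp: h_def\<close>)
  then have "(\<Sum>j<k. g (h j)) = (\<Sum>j<k. g j)"
    using sum.reindex[OF inj, of g] by simp
  then show ?thesis
    by (simp add: h_def periodic)
qed

lemma residue_primroot_power_cong_iff:
  assumes "prime p" "residue_primroot p \<tau>"
  shows "[\<tau> ^ a = \<tau> ^ b] (mod p) \<longleftrightarrow> [a = b] (mod p - 1)"
  using assms order_divides_expdiff[of p \<tau> a b]
  by (simp add: residue_primroot_def totient_prime coprime_commute)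

lemma residue_primroot_power_mod:
  assumes "prime p" "residue_primroot p \<tau>"
  shows "[\<tau> ^ (a mod (p - 1)) = \<tau> ^ a] (mod p)"
  using residue_primroot_power_cong_iff[OF assms] by (simp add: cong_def)

lemma residue_primroot_power_inj:
  assumes "prime p" "residue_primroot p \<tau>" "a < p - 1" "b < p - 1"
    and "[\<tau> ^ a = \<tau> ^ b] (mod p)"
  shows "a = b"
  using assms residue_primroot_power_cong_iff[OF assms(1,2)] by (simp add: cong_def)

lemma residue_primroot_subgroup_power_inj:
  assumes "prime p" "residue_primroot p \<tau>" "d * k = p - 1" "j < k" "l < k"
    and "[\<tau> ^ (d * j) = \<tau> ^ (d * l)] (mod p)"
  shows "j = l"
proof -
  have "d > 0"
    using assms(3) prime_gt_1_nat[OF assms(1)] by (auto intro!: gr0I)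
  with assms(3-5) have "d * j < p - 1" "d * l < p - 1"
    by (metis mult_less_cancel1)+
  then have "d * j = d * l"
    using residue_primroot_power_inj[OF assms(1,2)] assms(6) by blast
  with \<open>d > 0\<close> show ?thesis
    by simp
qed

lemma sum_add_char_primroot_subgroup_shift:
  assumes p: "prime p" and \<tau>: "residue_primroot p \<tau>" and dk: "d * k = p - 1"
    and y: "[y = x * \<tau> ^ (d * i)] (mod p)"
  shows "(\<Sum>j<k. add_char p (int y * int (\<tau> ^ (d * j))))
    = (\<Sum>j<k. add_char p (int x * int (\<tau> ^ (d * j))))"
proof -
  have "k > 0"
    using dk prime_gt_1_nat[OF p] by (auto intro!: gr0I)
  have char_cong: "add_char p (int a) = add_char p (int b)" if "[a = b] (mod p)" for a b
    using that prime_gt_0_nat[OF p] by (intro add_char_cong) (simp_all only: cong_int_iff)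
  have "add_char p (int (x * \<tau> ^ (d * (j mod k)))) = add_char p (int (x * \<tau> ^ (d * j)))" for j
  proof (rule char_cong, rule cong_scalar_left)
    show "[\<tau> ^ (d * (j mod k)) = \<tau> ^ (d * j)] (mod p)"
      using residue_primroot_power_mod[OF p \<tau>, of "d * j"] dk by (simp add: mult_mod_right)
  qed
  then have "(\<Sum>j<k. add_char p (int (x * \<tau> ^ (d * (i + j))))) = (\<Sum>j<k. add_char p (int (x * \<tau> ^ (d * j))))"
    by (rule sum_lessThan_shift_periodic[OF \<open>k > 0\<close>])
  moreover have "add_char p (int y * int (\<tau> ^ (d * j))) = add_char p (int (x * \<tau> ^ (d * (i + j))))" for j
    unfolding of_nat_mult[symmetric]
    by (rule char_cong)
      (use cong_scalar_right[OF y, of "\<tau> ^ (d * j)"] in \<open>simp add: distrib_left power_add mult.assoc\<close>)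
  ultimately show ?thesis
    by simp
qed

lemma norm_sum_primroot_subgroup_le_sqrt:
  assumes p: "prime p" and \<tau>: "residue_primroot p \<tau>" and "d dvd p - 1" and s: "coprime s p"
  shows "norm (\<Sum>j<(p - 1) div d. add_char p (int (s * \<tau> ^ (d * j)))) \<le> sqrt p"
proof -
  define k where "k = (p - 1) div d"
  have "p > 1"
    using p prime_gt_1_nat by blast
  have dk: "d * k = p - 1"
    using assms(3) by (simp add: k_def)
  then have "k > 0"
    using \<open>p > 1\<close> by (auto intro!: gr0I)
  have distinct: "j = l"
    if "j < k" "l < k" "[int (\<tau> ^ (d * j)) = int (\<tau> ^ (d * l))] (mod int p)" for j l
    using residue_primroot_subgroup_power_inj[OF p \<tau> dk] that by (simp only: cong_int_iff)
  define h where "h i = (s * \<tau> ^ (d * i)) mod p" for i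
  have "inj_on h {..<k}"
  proof
    fix i l assume il: "i \<in> {..<k}" "l \<in> {..<k}" "h i = h l"
    then have "[s * \<tau> ^ (d * i) = s * \<tau> ^ (d * l)] (mod p)"
      by (simp add: h_def cong_def)
    then have "[\<tau> ^ (d * i) = \<tau> ^ (d * l)] (mod p)"
      using s by (metis cong_mult_lcancel_nat coprime_commute)
    then show "i = l"
      using residue_primroot_subgroup_power_inj[OF p \<tau> dk] il by blast
  qed
  moreover have "h ` {..<k} \<subseteq> {..<p}"
    using \<open>p > 1\<close> by (auto simp: h_def)
  moreover have "(\<Sum>j<k. add_char p (int (h i) * int (\<tau> ^ (d * j))))
      = (\<Sum>j<k. add_char p (int s * int (\<tau> ^ (d * j))))" for i
    by (rule sum_add_char_primroot_subgroup_shift[OF p \<tau> dk]) (simp add: h_def cong_def)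
  ultimately have "norm (\<Sum>j<k. add_char p (int s * int (\<tau> ^ (d * j)))) \<le> sqrt p"
    using \<open>p > 1\<close> \<open>k > 0\<close> distinct
    by (intro norm_add_char_sum_le_sqrt[where f = "\<lambda>j. int (\<tau> ^ (d * j))" and h = h]) auto
  then show ?thesis
    by (simp add: k_def)
qed

lemma multiples_atLeastAtMost_eq_image:
  fixes d k :: nat
  assumes "d > 0"
  shows "{n \<in> {1..d * k}. d dvd n} = (\<lambda>j. d * j) ` {1..k}"
proof safe
  fix n assume n: "n \<in> {1..d * k}" "d dvd n"
  then obtain j where j: "n = d * j"
    by blast
  with n assms have "j \<in> {1..k}"
    by (auto intro: Suc_leI gr0I)
  with j show "n \<in> (\<lambda>j. d * j) ` {1..k}"
    by blast
qed (use assms in auto)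

lemma norm_sum_primroot_multiples_le_sqrt:
  assumes p: "prime p" and \<tau>: "residue_primroot p \<tau>" and "d dvd p - 1" and s: "coprime s p"
  shows "norm (\<Sum>n\<in>{n \<in> {1..p - 1}. d dvd n}. add_char p (int (s * \<tau> ^ n))) \<le> sqrt p"
proof -
  define k where "k = (p - 1) div d"
  define g where "g j = add_char p (int (s * \<tau> ^ (d * j)))" for j
  have "p > 1"
    using p prime_gt_1_nat by blast
  have dk: "d * k = p - 1"
    using assms(3) by (simp add: k_def)
  then have "d > 0" "k > 0"
    using \<open>p > 1\<close> by (auto intro!: gr0I)
  have "[\<tau> ^ 0 = \<tau> ^ (d * k)] (mod p)"
    using residue_primroot_power_mod[OF p \<tau>, of "d * k"] dk by simp
  then have "[int (s * \<tau> ^ (d * k)) = int (s * \<tau> ^ (d * 0))] (mod int p)"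
    by (simp only: cong_int_iff cong_scalar_left cong_sym mult_0_right)
  with \<open>p > 1\<close> have "g k = g 0"
    unfolding g_def by (intro add_char_cong) simp_all
  moreover have "{1..k} = insert k {1..<k}" "{..<k} = insert 0 {1..<k}"
    using \<open>k > 0\<close> by auto
  ultimately have "(\<Sum>j\<in>{1..k}. g j) = (\<Sum>j<k. g j)"
    by simp
  moreover have "(\<Sum>n\<in>{n \<in> {1..p - 1}. d dvd n}. add_char p (int (s * \<tau> ^ n))) = (\<Sum>j\<in>{1..k}. g j)"
    using \<open>d > 0\<close> unfolding dk[symmetric] multiples_atLeastAtMost_eq_image[OF \<open>d > 0\<close>]
    by (simp add: sum.reindex inj_on_def g_def)
  ultimately show ?thesis
    using norm_sum_primroot_subgroup_le_sqrt[OF assms] by (simp add: g_def k_def)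
qed

lemma coprime_iff_no_prime_factor_dvd:
  fixes n m :: nat
  assumes "m > 0"
  shows "coprime n m \<longleftrightarrow> (\<forall>q\<in>prime_factors m. \<not> q dvd n)"
proof
  assume "coprime n m"
  then show "\<forall>q\<in>prime_factors m. \<not> q dvd n"
    by (metis coprime_common_divisor in_prime_factors_iff not_prime_unit)
next
  assume no_factor: "\<forall>q\<in>prime_factors m. \<not> q dvd n"
  show "coprime n m"
  proof (rule ccontr)
    assume "\<not> coprime n m"
    then have "gcd n m \<noteq> 1"
      using coprime_iff_gcd_eq_1 by blast
    then obtain q where q: "prime q" "q dvd gcd n m"
      using prime_factor_nat by blast
    then have "q \<in> prime_factors m"
      using assms by (simp add: in_prime_factors_iff)
    with no_factor q(2) show False
      by simp
  qed
qed

lemma norm_sum_sieved_le: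
  fixes g :: "nat \<Rightarrow> 'a::real_normed_vector"
  assumes "finite N"
    and bound: "\<And>d. d dvd m \<Longrightarrow> norm (\<Sum>n\<in>{n \<in> N. d dvd n}. g n) \<le> B"
    and "finite Q" "Q \<subseteq> prime_factors m" "d dvd m" "\<forall>q\<in>Q. coprime d q"
  shows "norm (\<Sum>n\<in>{n \<in> N. d dvd n \<and> (\<forall>q\<in>Q. \<not> q dvd n)}. g n) \<le> 2 ^ card Q * B"
  using assms(3-)
proof (induction Q arbitrary: d rule: finite_induct)
  case empty
  then show ?case
    using bound by simp
next
  case (insert q Q)
  define A where "A e = {n \<in> N. e dvd n \<and> (\<forall>q\<in>Q. \<not> q dvd n)}" for e
  have q: "prime q" "q dvd m"
    using insert.prems(1) by (auto simp: in_prime_factors_iff)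
  have "coprime d q"
    using insert.prems(3) by simp
  then have "d * q dvd n \<longleftrightarrow> d dvd n \<and> q dvd n" for n
    by (meson divides_mult dvd_mult_left dvd_mult_right)
  then have "{n \<in> N. d dvd n \<and> (\<forall>q'\<in>insert q Q. \<not> q' dvd n)} = A d - A (d * q)"
    "A (d * q) \<subseteq> A d"
    unfolding A_def by blast+
  moreover have "finite (A d)"
    using \<open>finite N\<close> by (simp add: A_def)
  ultimately have split: "(\<Sum>n\<in>{n \<in> N. d dvd n \<and> (\<forall>q'\<in>insert q Q. \<not> q' dvd n)}. g n)
      = sum g (A d) - sum g (A (d * q))"
    by (simp add: sum_diff)
  have "norm (sum g (A d)) \<le> 2 ^ card Q * B"
    using insert by (simp add: A_def)
  moreover have "norm (sum g (A (d * q))) \<le> 2 ^ card Q * B"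
  proof -
    have "d * q dvd m"
      using insert.prems(2) q(2) \<open>coprime d q\<close> by (rule divides_mult)
    moreover have "coprime q q'" if "q' \<in> Q" for q'
      using insert.hyps(2) insert.prems(1) that q(1) by (auto intro: primes_coprime)
    ultimately show ?thesis
      unfolding A_def using insert.IH insert.prems(1,3) by simp
  qed
  ultimately show ?case
    unfolding split using insert.hyps norm_triangle_ineq4[of "sum g (A d)" "sum g (A (d * q))"]
    by simp
qed

lemma norm_sum_coprime_le:
  fixes g :: "nat \<Rightarrow> 'a::real_normed_vector"
  assumes "finite N" "m > 0"
    and bound: "\<And>d. d dvd m \<Longrightarrow> norm (\<Sum>n\<in>{n \<in> N. d dvd n}. g n) \<le> B"
  shows "norm (\<Sum>n\<in>{n \<in> N. coprime n m}. g n) \<le> 2 ^ card (prime_factors m) * B"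
  using norm_sum_sieved_le[OF assms(1) bound, where Q = "prime_factors m" and d = 1]
  by (simp add: coprime_iff_no_prime_factor_dvd[OF \<open>m > 0\<close>])

lemma power_card_prime_factors_le:
  fixes b m :: nat
  assumes "b > 0" "m > 0"
  shows "b ^ card (prime_factors m) \<le> b ^ b * m"
proof -
  define A where "A = {q \<in> prime_factors m. q < b}"
  define B where "B = {q \<in> prime_factors m. b \<le> q}"
  have "prime_factors m = A \<union> B" "A \<inter> B = {}"
    by (auto simp: A_def B_def)
  then have card_split: "card (prime_factors m) = card A + card B"
    using card_Un_disjoint[of A B] by (simp add: A_def B_def)
  have "card A \<le> b"
    using card_mono[of "{..<b}" A] by (auto simp: A_def)
  then have "b ^ card A \<le> b ^ b"
    using assms(1) by (simp add: power_increasing)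
  moreover have "b ^ card B \<le> m"
  proof -
    have "b ^ card B = (\<Prod>q\<in>B. b)"
      by simp
    also have "\<dots> \<le> (\<Prod>q\<in>B. q)"
      by (rule prod_mono) (simp add: B_def)
    also have "\<dots> \<le> m"
    proof (rule dvd_imp_le[OF _ assms(2)])
      have "(\<Prod>q\<in>B. q) dvd (\<Prod>q\<in>prime_factors m. q)"
        by (rule prod_dvd_prod_subset) (auto simp: B_def)
      also have "\<dots> dvd (\<Prod>q\<in>prime_factors m. q ^ multiplicity q m)"
        by (rule prod_dvd_prod, rule dvd_power) (simp add: prime_factors_multiplicity)
      also have "\<dots> = m"
        using prod_prime_factors[of m] assms(2) by simp
      finally show "(\<Prod>q\<in>B. q) dvd m" .
    qed
    finally show ?thesis .
  qed
  ultimately show ?thesis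
    by (simp add: card_split power_add mult_le_mono)
qed

lemma two_power_card_prime_factors_le:
  fixes m :: nat
  assumes "m > 0"
  shows "(2::real) ^ card (prime_factors m) \<le> 2 ^ 16 * real m powr (1/4)"
proof -
  define w where "w = card (prime_factors m)"
  have "((2::real) ^ w) ^ 4 = real (16 ^ w)"
    by (simp flip: power_mult add: mult.commute[of w 4] power_mult)
  also have "\<dots> \<le> real (16 ^ 16 * m)"
    using power_card_prime_factors_le[of 16 m] assms unfolding w_def of_nat_le_iff by simp
  also have "\<dots> = (2 ^ 16 * real m powr (1/4)) ^ 4"
    using assms by (simp add: power_mult_distrib powr_power)
  finally show ?thesis
    using power_le_imp_le_base[of "2 ^ w" 3 "2 ^ 16 * real m powr (1/4)"] unfolding w_def by simp
qed

lemma norm_sum_coprime_exponents_le: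
  assumes p: "prime p" and \<tau>: "residue_primroot p \<tau>" and s: "s \<in> {1..p - 1}"
  shows "norm (\<Sum>n\<in>{n \<in> {1..p - 1}. coprime n (p - 1)}. add_char p (int (s * \<tau> ^ n)))
    \<le> 2 ^ 16 * real p powr (3/4)"
proof -
  have "p > 1"
    using p prime_gt_1_nat by blast
  have "\<not> p dvd s"
    using s by (auto dest: dvd_imp_le)
  then have "coprime s p"
    using p by (simp add: prime_imp_coprime coprime_commute)
  then have "norm (\<Sum>n\<in>{n \<in> {1..p - 1}. coprime n (p - 1)}. add_char p (int (s * \<tau> ^ n)))
      \<le> 2 ^ card (prime_factors (p - 1)) * sqrt p"
    using \<open>p > 1\<close> norm_sum_primroot_multiples_le_sqrt[OF p \<tau>] by (intro norm_sum_coprime_le) auto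
  also have "\<dots> \<le> (2 ^ 16 * real (p - 1) powr (1/4)) * sqrt p"
    using \<open>p > 1\<close> two_power_card_prime_factors_le[of "p - 1"] by (intro mult_right_mono) auto
  also have "\<dots> \<le> (2 ^ 16 * real p powr (1/4)) * real p powr (1/2)"
    by (intro mult_mono powr_mono2) (auto simp: powr_half_sqrt)
  also have "\<dots> = 2 ^ 16 * real p powr (3/4)"
    by (simp add: mult.assoc powr_add[symmetric])
  finally show ?thesis .
qed

theorem lemma3p1:
  fixes \<epsilon> :: real
  assumes "0 < \<epsilon>" and "\<epsilon> < 1/16"
  shows "\<exists>C > 0. \<exists>P0 :: nat. \<forall>p \<tau> s :: nat.
           prime p \<and> p \<ge> P0 \<and> residue_primroot p \<tau> \<and>
           s \<in> {1..p-1} \<and> coprime s (p - 1) \<longrightarrow>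
           norm (\<Sum>n \<in> {n \<in> {1..p-1}. coprime n (p - 1)}.
                   exp (2 * of_real pi * \<i> * of_nat s * of_nat (\<tau> ^ n) / of_nat p))
             \<le> C * real p powr (1 - \<epsilon>)"
proof (intro exI[of _ "2 ^ 16 :: real"] conjI exI[of _ "0 :: nat"] allI impI)
  fix p \<tau> s :: nat
  assume h: "prime p \<and> 0 \<le> p \<and> residue_primroot p \<tau> \<and> s \<in> {1..p-1} \<and> coprime s (p - 1)"
  then have "real p \<ge> 1"
    using prime_gt_1_nat by force
  then have "real p powr (3/4) \<le> real p powr (1 - \<epsilon>)"
    using assms by (intro powr_mono) auto
  moreover have "(\<Sum>n \<in> {n \<in> {1..p-1}. coprime n (p - 1)}.
                   exp (2 * of_real pi * \<i> * of_nat s * of_nat (\<tau> ^ n) / of_nat p))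
      = (\<Sum>n \<in> {n \<in> {1..p-1}. coprime n (p - 1)}. add_char p (int (s * \<tau> ^ n)))"
    by (simp add: add_char_def mult.assoc)
  ultimately show "norm (\<Sum>n \<in> {n \<in> {1..p-1}. coprime n (p - 1)}.
                   exp (2 * of_real pi * \<i> * of_nat s * of_nat (\<tau> ^ n) / of_nat p))
             \<le> 2 ^ 16 * real p powr (1 - \<epsilon>)"
    using norm_sum_coprime_exponents_le[of p \<tau> s] h by simp
qed simp

end
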